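(* Let $H$ be a separable complex Hilbert space, $(\Omega,\mu)$ a measure space with positive measure, let $K\in B(H)$ have closed range, and let $F:\Omega\to H$ be a Parseval continuous $K$-frame of $H$ with a dual continuous $K$-Bessel sequence $G$. Then $G$ is the canonical dual continuous $K$-Bessel sequence $K^{\dagger}F$ of $F$ if and only if $T_G^{\ast}T_G=T_G^{\ast}T_{Q}$ for every dual continuous $K$-Bessel sequence $Q$ of $F$, where $T_G$ and $T_Q$ denote the analysis operators of $G$ and $Q$.
   Context: A map $F:\Omega\to H$ is weakly measurable if $\omega\mapsto\langle f,F(\omega)\rangle$ is measurable for every $f\in H$. A continuous Bessel sequence is a weakly measurable $G$ with $\int_\Omega|\langle f,G(\omega)\rangle|^2\,d\mu(\omega)\le B\|f\|^2$ for all $f\in H$, for some $B>0$; its analysis operator is $T_G:H\to L^2(\Omega,\mu)$, $T_Gf=\{\langle f,G(\omega)\rangle\}_{\omega}$. A Parseval continuous $K$-frame is a weakly measurable $F$ with $\int_\Omega|\langle f,F(\omega)\rangle|^2\,d\mu(\omega)=\|K^{\ast}f\|^2$ for all $f\in H$. A dual continuous $K$-Bessel sequence of $F$ is a continuous Bessel sequence $G$ with $Kf=\int_\Omega\langle f,G(\omega)\rangle F(\omega)\,d\mu(\omega)$ for all $f\in H$. $K^{\dagger}$ is the Moore–Penrose pseudo-inverse of $K$; the canonical dual continuous $K$-Bessel sequence of $F$ is $K^{\dagger}F$, which is a dual continuous $K$-Bessel sequence of $F$ whose analysis operator has minimal norm among all such duals. (The paper uses the letter $H$ both for the Hilbert space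 and for the arbitrary dual; here the arbitrary dual is called $Q$.) *)

theory Defs
  imports "HOL-Analysis.Analysis" "HOL-Probability.Probability"
begin

class complex_inner_space = real_normed_vector +
  fixes scaleC :: "complex \<Rightarrow> 'a \<Rightarrow> 'a"
    and cinner :: "'a \<Rightarrow> 'a \<Rightarrow> complex"
  assumes scaleC_add_right: "scaleC c (x + y) = scaleC c x + scaleC c y"
    and scaleC_add_left: "scaleC (c + d) x = scaleC c x + scaleC d x"
    and scaleC_scaleC: "scaleC c (scaleC d x) = scaleC (c * d) x"
    and scaleC_one: "scaleC 1 x = x"
    and scaleR_scaleC: "scaleR r x = scaleC (complex_of_real r) x"
    and cinner_add_left: "cinner (x + y) z = cinner x z + cinner y z"
    and cinner_scaleC_left: "cinner (scaleC c x) y = c * cinner x y"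
    and cinner_commute: "cinner y x = cnj (cinner x y)"
    and cinner_self_norm: "cinner x x = complex_of_real ((norm x)\<^sup>2)"

class complex_hilbert_space = complex_inner_space + complete_space

definition separable_hilbert :: "'h::complex_hilbert_space itself \<Rightarrow> bool" where
  "separable_hilbert _ \<longleftrightarrow> separable_space (euclidean :: 'h topology)"

definition bounded_clinear :: "('h::complex_inner_space \<Rightarrow> 'k::complex_inner_space) \<Rightarrow> bool" where
  "bounded_clinear T \<longleftrightarrow>
     (\<forall>x y. T (x + y) = T x + T y) \<and> (\<forall>c x. T (scaleC c x) = scaleC c (T x)) \<and>
     (\<exists>C. \<forall>x. norm (T x) \<le> norm x * C)"

definition cadjoint :: "('h::complex_inner_space \<Rightarrow> 'h) \<Rightarrow> ('h \<Rightarrow> 'h)" where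
  "cadjoint T = (SOME S. \<forall>x y. cinner (T x) y = cinner x (S y))"

definition selfadjoint_op :: "('h::complex_inner_space \<Rightarrow> 'h) \<Rightarrow> bool" where
  "selfadjoint_op P \<longleftrightarrow> (\<forall>x y. cinner (P x) y = cinner x (P y))"

definition moore_penrose :: "('h::complex_hilbert_space \<Rightarrow> 'h) \<Rightarrow> ('h \<Rightarrow> 'h)" where
  "moore_penrose K = (THE Kd. bounded_clinear Kd \<and>
      K \<circ> Kd \<circ> K = K \<and> Kd \<circ> K \<circ> Kd = Kd \<and>
      selfadjoint_op (K \<circ> Kd) \<and> selfadjoint_op (Kd \<circ> K))"

definition weakly_measurable :: "'o measure \<Rightarrow> ('o \<Rightarrow> 'h::complex_inner_space) \<Rightarrow> bool" where
  "weakly_measurable M F \<longleftrightarrow> (\<forall>f. (\<lambda>\<omega>. cinner f (F \<omega>)) \<in> borel_measurable M)"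

definition cont_bessel :: "'o measure \<Rightarrow> ('o \<Rightarrow> 'h::complex_inner_space) \<Rightarrow> bool" where
  "cont_bessel M G \<longleftrightarrow> weakly_measurable M G \<and>
     (\<exists>B>0. \<forall>f. (\<integral>\<^sup>+\<omega>. ennreal ((cmod (cinner f (G \<omega>)))\<^sup>2) \<partial>M) \<le> ennreal (B * (norm f)\<^sup>2))"

definition parseval_cont_K_frame ::
    "'o measure \<Rightarrow> ('h::complex_inner_space \<Rightarrow> 'h) \<Rightarrow> ('o \<Rightarrow> 'h) \<Rightarrow> bool" where
  "parseval_cont_K_frame M K F \<longleftrightarrow> weakly_measurable M F \<and>
     (\<forall>f. (\<integral>\<^sup>+\<omega>. ennreal ((cmod (cinner f (F \<omega>)))\<^sup>2) \<partial>M) = ennreal ((norm (cadjoint K f))\<^sup>2))"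

text \<open>G is a dual continuous K-Bessel sequence of F:
  K f = \<integral> <f, G w> F w d\<mu>(w), the integral taken in the weak sense.\<close>
definition dual_cont_K_bessel ::
    "'o measure \<Rightarrow> ('h::complex_inner_space \<Rightarrow> 'h) \<Rightarrow> ('o \<Rightarrow> 'h) \<Rightarrow> ('o \<Rightarrow> 'h) \<Rightarrow> bool" where
  "dual_cont_K_bessel M K F G \<longleftrightarrow> cont_bessel M G \<and>
     (\<forall>f h. cinner (K f) h = (LINT \<omega>|M. cinner f (G \<omega>) * cinner (F \<omega>) h))"

text \<open>Inner product of L^2(\<Omega>,\<mu>) (on representatives).\<close>
definition l2_inner :: "'o measure \<Rightarrow> ('o \<Rightarrow> complex) \<Rightarrow> ('o \<Rightarrow> complex) \<Rightarrow> complex" where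
  "l2_inner M u v = (LINT \<omega>|M. u \<omega> * cnj (v \<omega>))"

definition analysis_op :: "('o \<Rightarrow> 'h::complex_inner_space) \<Rightarrow> 'h \<Rightarrow> ('o \<Rightarrow> complex)" where
  "analysis_op G f = (\<lambda>\<omega>. cinner f (G \<omega>))"

definition analysis_adj :: "'o measure \<Rightarrow> ('o \<Rightarrow> 'h::complex_inner_space) \<Rightarrow> ('o \<Rightarrow> complex) \<Rightarrow> 'h" where
  "analysis_adj M G u = (THE x. \<forall>h. cinner x h = l2_inner M u (analysis_op G h))"

end

theory Submission
  imports Defs
begin

text \<open>
  Write \<open>S(A,B)(f,h) = \<integral> \<langle>f, A \<omega>\<rangle> \<langle>B \<omega>, h\<rangle> d\<mu>\<close> (\<open>cross_form\<close>), which for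
  Bessel families is \<open>\<langle>T\<^sub>B\<^sup>* T\<^sub>A f, h\<rangle>\<close>. The Parseval identity gives
  \<open>S(F,F)(g,h) = \<langle>K\<^sup>* g, K\<^sup>* h\<rangle>\<close> by polarization, so for the canonical dual
  \<open>P = K\<^sup>\<dagger> F\<close> and every dual \<open>Q\<close> both \<open>S(Q,P)\<close> and \<open>S(P,Q)\<close> equal
  \<open>\<langle>K\<^sup>\<dagger> K f, h\<rangle>\<close>, as \<open>K\<^sup>\<dagger> K\<close> is self-adjoint. Hence \<open>G = P\<close> a.e. makes
  \<open>T\<^sub>G\<^sup>* T\<^sub>G\<close> and \<open>T\<^sub>G\<^sup>* T\<^sub>Q\<close> both equal to \<open>K\<^sup>\<dagger> K\<close>.
  Conversely, the hypothesis for \<open>Q = P\<close> gives \<open>S(G,G) = S(P,G)\<close>, so the four forms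
  built from \<open>G\<close> and \<open>P\<close> agree and \<open>\<integral> |\<langle>f, G \<omega>\<rangle> - \<langle>f, P \<omega>\<rangle>|\<^sup>2 d\<mu> = 0\<close> for
  every \<open>f\<close>; on a countable dense set of \<open>f\<close> this yields \<open>G = P\<close> a.e.

  That \<open>K\<^sup>\<dagger>\<close> exists as a bounded operator rests on the closed range: by Baire's theorem
  \<open>K\<close> is bounded below on the orthogonal complement of its kernel.
\<close>

section \<open>Complex inner product spaces\<close>

subclass (in complex_hilbert_space) banach ..

lemma cinner_add_right: "cinner x (y + z) = cinner x y + cinner x z"
  by (metis cinner_commute cinner_add_left complex_cnj_add)

lemma cinner_scaleC_right: "cinner x (scaleC c y) = cnj c * cinner x y"
  by (metis cinner_commute cinner_scaleC_left complex_cnj_mult complex_cnj_cnj)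

lemma cinner_diff_left: "cinner (x - y) z = cinner x z - cinner y z"
  using cinner_add_left[of "x - y" y z] by simp

lemma cinner_diff_right: "cinner x (y - z) = cinner x y - cinner x z"
  using cinner_add_right[of x "y - z" z] by simp

lemma cinner_zero_left [simp]: "cinner 0 y = 0"
  using cinner_diff_left[of 0 0 y] by simp

lemma cinner_zero_right [simp]: "cinner x 0 = 0"
  using cinner_diff_right[of x 0 0] by simp

lemma scaleC_zero_right [simp]: "scaleC c 0 = 0"
  using scaleC_add_right[of c 0 0] by simp

lemma cinner_scaleR_left: "cinner (scaleR r x) y = scaleR r (cinner x y)"
  by (simp add: scaleR_scaleC cinner_scaleC_left scaleR_conv_of_real)

lemma scaleC_minus_one: "scaleC (-1) x = - x"
  using scaleR_scaleC[of "-1" x] by simp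

lemma cinner_self_eq_zero [simp]: "cinner x x = 0 \<longleftrightarrow> x = 0"
  by (simp add: cinner_self_norm)

lemma cinner_left_ext: "(\<And>y. cinner x y = cinner x' y) \<Longrightarrow> x = x'"
  using cinner_self_eq_zero[of "x - x'"] by (simp add: cinner_diff_left)

lemma cinner_right_ext: "(\<And>y. cinner y x = cinner y x') \<Longrightarrow> x = x'"
  by (rule cinner_left_ext) (metis cinner_commute)

lemma norm_add_square:
  "(norm (x + y))\<^sup>2 = (norm x)\<^sup>2 + (norm y)\<^sup>2 + 2 * Re (cinner x y)"
proof -
  have "cinner (x + y) (x + y) = cinner x x + cinner y y + cinner x y + cinner y x"
    by (simp add: cinner_add_left cinner_add_right)
  from arg_cong[OF this, of Re] show ?thesis
    by (simp add: cinner_self_norm cinner_commute[of y x])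
qed

lemma pythagoras: "cinner x y = 0 \<Longrightarrow> (norm (x + y))\<^sup>2 = (norm x)\<^sup>2 + (norm y)\<^sup>2"
  by (simp add: norm_add_square)

lemma parallelogram_law:
  fixes x y :: "'a::complex_inner_space"
  shows "(norm (x + y))\<^sup>2 + (norm (x - y))\<^sup>2 = 2 * (norm x)\<^sup>2 + 2 * (norm y)\<^sup>2"
  using norm_add_square[of x y] norm_add_square[of x "- y"] scaleC_minus_one[of y]
    cinner_scaleC_right[of x "-1" y]
  by simp

lemma norm_diff_component_square:
  assumes "y \<noteq> 0"
  shows "(norm (x - scaleC (cinner x y / complex_of_real ((norm y)\<^sup>2)) y))\<^sup>2
         = (norm x)\<^sup>2 - (cmod (cinner x y))\<^sup>2 / (norm y)\<^sup>2"
proof -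
  define a where "a = cinner x y"
  define n where "n = complex_of_real ((norm y)\<^sup>2)"
  have "n \<noteq> 0" "cnj n = n" "cinner y y = n" using assms by (simp_all add: n_def cinner_self_norm)
  have "cinner y x = cnj a" by (simp add: a_def cinner_commute[of y x])
  have "cinner (x - scaleC (a / n) y) (x - scaleC (a / n) y)
      = cinner x x - cnj (a / n) * a - (a / n) * cnj a + (a / n) * cnj (a / n) * n"
    by (simp add: cinner_diff_left cinner_diff_right cinner_scaleC_left cinner_scaleC_right
        \<open>cinner y y = n\<close> \<open>cinner y x = cnj a\<close> a_def[symmetric] algebra_simps)
  also have "\<dots> = cinner x x - a * cnj a / n"
    using \<open>n \<noteq> 0\<close> \<open>cnj n = n\<close> by (simp add: field_simps)
  also have "\<dots> = complex_of_real ((norm x)\<^sup>2 - (cmod a)\<^sup>2 / (norm y)\<^sup>2)"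
    by (simp add: cinner_self_norm complex_norm_square[symmetric] n_def)
  finally show ?thesis
    unfolding a_def n_def cinner_self_norm of_real_eq_iff .
qed

lemma cinner_cauchy_schwarz: "cmod (cinner x y) \<le> norm x * norm y"
proof (cases "y = 0")
  case False
  have "(cmod (cinner x y))\<^sup>2 / (norm y)\<^sup>2 \<le> (norm x)\<^sup>2"
    using norm_diff_component_square[OF False, of x] by (metis diff_ge_0_iff_ge zero_le_power2)
  then have "(cmod (cinner x y))\<^sup>2 \<le> (norm x * norm y)\<^sup>2"
    using False by (simp add: pos_divide_le_eq power_mult_distrib)
  then show ?thesis
    by (rule power2_le_imp_le) simp
qed simp

lemma bounded_linear_cinner_left: "bounded_linear (\<lambda>x. cinner x y)"
  by (rule bounded_linear_intro[where K = "norm y"])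
    (simp_all add: cinner_add_left cinner_scaleR_left cinner_cauchy_schwarz)

lemma cinner_dense_eq_zero:
  assumes "closure D = UNIV" "\<And>d. d \<in> D \<Longrightarrow> cinner d z = 0"
  shows "z = 0"
proof -
  have "closed {x. cinner x z = 0}"
    using continuous_closed_preimage_constant[OF
        linear_continuous_on[OF bounded_linear_cinner_left] closed_UNIV, where a = 0]
    by simp
  moreover have "D \<subseteq> {x. cinner x z = 0}" using assms(2) by blast
  ultimately have "closure D \<subseteq> {x. cinner x z = 0}" by (rule closure_minimal[rotated])
  then have "cinner z z = 0" using assms(1) by blast
  then show ?thesis by simp
qed

section \<open>Orthogonal projections\<close>

definition csubspace :: "'a::complex_inner_space set \<Rightarrow> bool" where
  "csubspace S \<longleftrightarrow> 0 \<in> S \<and> (\<forall>x\<in>S. \<forall>y\<in>S. x + y \<in> S) \<and> (\<forall>c. \<forall>x\<in>S. scaleC c x \<in> S)"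

lemma csubspace_diff: "csubspace S \<Longrightarrow> x \<in> S \<Longrightarrow> y \<in> S \<Longrightarrow> x - y \<in> S"
  unfolding csubspace_def by (metis scaleC_minus_one diff_conv_add_uminus)

lemma csubspace_imp_convex: "csubspace S \<Longrightarrow> convex S"
  unfolding csubspace_def convex_def by (simp add: scaleR_scaleC)

lemma minimizing_sequence_Cauchy:
  fixes x :: "'a::complex_inner_space"
  assumes "convex S" and q: "\<And>n. q n \<in> S" and d: "\<And>s. s \<in> S \<Longrightarrow> d \<le> (norm (x - s))\<^sup>2"
    and q_approx: "\<And>n. (norm (x - q n))\<^sup>2 \<le> d + e n" and "e \<longlonglongrightarrow> 0"
  shows "Cauchy q"
proof (rule metric_CauchyI)
  fix \<epsilon> :: real
  assume "\<epsilon> > 0"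
  then have "\<forall>\<^sub>F n in sequentially. e n < \<epsilon>\<^sup>2 / 4"
    using order_tendstoD(2)[OF \<open>e \<longlonglongrightarrow> 0\<close>, of "\<epsilon>\<^sup>2 / 4"] by simp
  then obtain N where N: "\<And>n. n \<ge> N \<Longrightarrow> e n < \<epsilon>\<^sup>2 / 4"
    unfolding eventually_sequentially by blast
  have "dist (q m) (q n) < \<epsilon>" if "m \<ge> N" "n \<ge> N" for m n
  proof -
    define mid where "mid = (1/2) *\<^sub>R (q m + q n)"
    have "mid \<in> S"
      using convexD[OF \<open>convex S\<close> q q, of "1/2" "1/2"] by (simp add: mid_def scaleR_add_right)
    have "(x - q m) + (x - q n) = 2 *\<^sub>R (x - mid)"
      by (simp add: mid_def scaleR_diff_right scaleR_2 algebra_simps)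
    then have "(norm (2 *\<^sub>R (x - mid)))\<^sup>2 + (norm (q m - q n))\<^sup>2
        = 2 * (norm (x - q m))\<^sup>2 + 2 * (norm (x - q n))\<^sup>2"
      using parallelogram_law[of "x - q m" "x - q n"] by (simp add: norm_minus_commute)
    then have "(norm (q m - q n))\<^sup>2 = 2 * (norm (x - q m))\<^sup>2 + 2 * (norm (x - q n))\<^sup>2
        - 4 * (norm (x - mid))\<^sup>2"
      by (simp add: power_mult_distrib)
    also have "\<dots> < \<epsilon>\<^sup>2"
      using d[OF \<open>mid \<in> S\<close>] q_approx[of m] q_approx[of n] N[OF \<open>m \<ge> N\<close>] N[OF \<open>n \<ge> N\<close>]
      by linarith
    finally show ?thesis
      using \<open>\<epsilon> > 0\<close> by (simp add: dist_norm power_less_imp_less_base)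
  qed
  then show "\<exists>N. \<forall>m\<ge>N. \<forall>n\<ge>N. dist (q m) (q n) < \<epsilon>" by blast
qed

lemma closest_point_exists_hilbert:
  fixes S :: "'a::complex_hilbert_space set"
  assumes "closed S" "convex S" "S \<noteq> {}"
  obtains p where "p \<in> S" "\<And>s. s \<in> S \<Longrightarrow> norm (x - p) \<le> norm (x - s)"
proof -
  define d where "d = Inf ((\<lambda>s. (norm (x - s))\<^sup>2) ` S)"
  have bdd: "bdd_below ((\<lambda>s. (norm (x - s))\<^sup>2) ` S)"
    by (rule bdd_belowI[of _ 0]) auto
  have d_le: "d \<le> (norm (x - s))\<^sup>2" if "s \<in> S" for s
    unfolding d_def using that bdd by (simp add: cInf_lower)
  have "\<exists>s\<in>S. (norm (x - s))\<^sup>2 < d + inverse (real (Suc n))" for n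
    using cInf_less_iff[OF _ bdd, of "d + inverse (real (Suc n))"] assms(3)
    unfolding d_def by auto
  then obtain q where q: "\<And>n. q n \<in> S" "\<And>n. (norm (x - q n))\<^sup>2 < d + inverse (real (Suc n))"
    by metis
  have "Cauchy q"
    using minimizing_sequence_Cauchy[OF assms(2) q(1) d_le _ LIMSEQ_inverse_real_of_nat] q(2)
    by (simp add: less_imp_le)
  then obtain p where "q \<longlonglongrightarrow> p"
    using Cauchy_convergent_iff convergent_def by blast
  then have "p \<in> S"
    using closed_sequentially[OF assms(1)] q(1) by blast
  have "(\<lambda>n. (norm (x - q n))\<^sup>2) \<longlonglongrightarrow> (norm (x - p))\<^sup>2"
    by (intro tendsto_intros \<open>q \<longlonglongrightarrow> p\<close>)
  moreover have "(\<lambda>n. (norm (x - q n))\<^sup>2) \<longlonglongrightarrow> d"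
    by (rule tendsto_sandwich[OF _ _ tendsto_const LIMSEQ_inverse_real_of_nat_add])
      (use d_le q(1) q(2)[THEN less_imp_le] in auto)
  ultimately have "(norm (x - p))\<^sup>2 = d"
    by (rule LIMSEQ_unique)
  then show thesis
    using that \<open>p \<in> S\<close> d_le by (metis norm_ge_zero power2_le_imp_le)
qed

lemma closest_point_orthogonal:
  assumes "csubspace S" "p \<in> S" "\<And>s. s \<in> S \<Longrightarrow> norm (x - p) \<le> norm (x - s)" "s \<in> S"
  shows "cinner (x - p) s = 0"
proof (cases "s = 0")
  case False
  define t where "t = cinner (x - p) s / complex_of_real ((norm s)\<^sup>2)"
  have "p + scaleC t s \<in> S"
    using assms(1,2,4) by (simp add: csubspace_def)
  then have "(norm (x - p))\<^sup>2 \<le> (norm (x - p - scaleC t s))\<^sup>2"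
    using assms(3) by (simp add: diff_diff_eq power_mono)
  also have "\<dots> = (norm (x - p))\<^sup>2 - (cmod (cinner (x - p) s))\<^sup>2 / (norm s)\<^sup>2"
    unfolding t_def by (rule norm_diff_component_square[OF False])
  finally have "(cmod (cinner (x - p) s))\<^sup>2 / (norm s)\<^sup>2 \<le> 0"
    by simp
  then show ?thesis
    using False by (simp add: divide_le_0_iff)
qed simp

lemma orthogonal_projection_exists:
  fixes S :: "'a::complex_hilbert_space set"
  assumes "csubspace S" "closed S"
  shows "\<exists>p\<in>S. \<forall>s\<in>S. cinner (x - p) s = 0"
proof -
  have "S \<noteq> {}" using assms(1) by (auto simp: csubspace_def)
  with assms obtain p where "p \<in> S" "\<And>s. s \<in> S \<Longrightarrow> norm (x - p) \<le> norm (x - s)"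
    using closest_point_exists_hilbert csubspace_imp_convex by metis
  then show ?thesis
    using closest_point_orthogonal[OF assms(1)] by blast
qed

definition proj :: "'a::complex_inner_space set \<Rightarrow> 'a \<Rightarrow> 'a" where
  "proj S x = (SOME p. p \<in> S \<and> (\<forall>s\<in>S. cinner (x - p) s = 0))"

context
  fixes S :: "'a::complex_hilbert_space set"
  assumes S: "csubspace S" "closed S"
begin

lemma proj_in: "proj S x \<in> S"
  and proj_orthogonal: "s \<in> S \<Longrightarrow> cinner (x - proj S x) s = 0"
  using someI_ex[OF orthogonal_projection_exists[OF S, of x, unfolded Bex_def]]
  unfolding proj_def by blast+

lemma proj_unique:
  assumes "q \<in> S" "\<And>s. s \<in> S \<Longrightarrow> cinner (x - q) s = 0"
  shows "proj S x = q"
proof -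
  have "proj S x - q \<in> S"
    using csubspace_diff[OF S(1) proj_in assms(1)] .
  then have "cinner (proj S x - q) (proj S x - q) = 0"
    using assms(2) proj_orthogonal
    by (metis (no_types) cinner_diff_left diff_diff_eq2 diff_self diff_zero)
  then show ?thesis by simp
qed

lemma proj_fixed: "x \<in> S \<Longrightarrow> proj S x = x"
  by (rule proj_unique) simp_all

lemma proj_add: "proj S (x + y) = proj S x + proj S y"
proof (rule proj_unique)
  show "proj S x + proj S y \<in> S" using S(1) proj_in by (simp add: csubspace_def)
  have "x + y - (proj S x + proj S y) = (x - proj S x) + (y - proj S y)" by simp
  then show "cinner (x + y - (proj S x + proj S y)) s = 0" if "s \<in> S" for s
    using proj_orthogonal[OF that, of x] proj_orthogonal[OF that, of y]
    by (simp only: cinner_add_left) simp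
qed

lemma proj_scaleC: "proj S (scaleC c x) = scaleC c (proj S x)"
proof (rule proj_unique)
  show "scaleC c (proj S x) \<in> S" using S(1) proj_in by (simp add: csubspace_def)
  have "scaleC c x - scaleC c (proj S x) = scaleC c (x - proj S x)"
    by (metis add_diff_cancel diff_add_cancel scaleC_add_right)
  then show "cinner (scaleC c x - scaleC c (proj S x)) s = 0" if "s \<in> S" for s
    using proj_orthogonal[OF that] by (simp add: cinner_scaleC_left)
qed

lemma proj_selfadjoint: "cinner (proj S x) y = cinner x (proj S y)"
proof -
  have "cinner (proj S x) (y - proj S y) = 0"
    using proj_orthogonal[OF proj_in, of y x] by (metis cinner_commute complex_cnj_zero)
  moreover have "cinner (x - proj S x) (proj S y) = 0"
    by (rule proj_orthogonal[OF proj_in])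
  ultimately show ?thesis
    by (simp add: cinner_diff_left cinner_diff_right)
qed

lemma proj_norm_le: "norm (proj S x) \<le> norm x"
proof -
  have "cinner (proj S x) (x - proj S x) = 0"
    using proj_orthogonal[OF proj_in, of x x] by (metis cinner_commute complex_cnj_zero)
  then have "(norm x)\<^sup>2 = (norm (proj S x))\<^sup>2 + (norm (x - proj S x))\<^sup>2"
    using pythagoras by fastforce
  then show ?thesis
    by (metis le_add_same_cancel1 norm_ge_zero power2_le_imp_le zero_le_power2)
qed

end

section \<open>Riesz representation and adjoints\<close>

lemma bounded_clinear_add: "bounded_clinear T \<Longrightarrow> T (x + y) = T x + T y"
  and bounded_clinear_scaleC: "bounded_clinear T \<Longrightarrow> T (scaleC c x) = scaleC c (T x)"
  by (simp_all add: bounded_clinear_def)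

lemma bounded_clinear_imp_bounded_linear: "bounded_clinear T \<Longrightarrow> bounded_linear T"
  unfolding bounded_clinear_def by (auto intro: bounded_linear_intro simp: scaleR_scaleC)

lemma bounded_clinear_diff: "bounded_clinear T \<Longrightarrow> T (x - y) = T x - T y"
  by (simp add: linear_diff bounded_linear.linear bounded_clinear_imp_bounded_linear)

lemma bounded_clinear_zero: "bounded_clinear T \<Longrightarrow> T 0 = 0"
  using bounded_clinear_diff[of T 0 0] by simp

lemma conj_linear_eq_cinner:
  fixes \<psi> :: "'a::complex_inner_space \<Rightarrow> complex"
  assumes add: "\<And>x y. \<psi> (x + y) = \<psi> x + \<psi> y"
    and scale: "\<And>c x. \<psi> (scaleC c x) = cnj c * \<psi> x"
    and "\<psi> w \<noteq> 0" and w_orthogonal: "\<And>s. \<psi> s = 0 \<Longrightarrow> cinner w s = 0"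
  shows "\<psi> x = cinner (scaleC (\<psi> w / complex_of_real ((norm w)\<^sup>2)) w) x"
proof -
  have "w \<noteq> 0"
    using \<open>\<psi> w \<noteq> 0\<close> add[of 0 0] by auto
  define c where "c = cnj (\<psi> x / \<psi> w)"
  have "\<psi> (x - scaleC c w) = 0"
    using add[of "x - scaleC c w" "scaleC c w"] \<open>\<psi> w \<noteq> 0\<close> by (simp add: scale c_def)
  then have "cinner w (x - scaleC c w) = 0"
    by (rule w_orthogonal)
  then have "cinner w x = \<psi> x / \<psi> w * complex_of_real ((norm w)\<^sup>2)"
    by (simp add: cinner_diff_right cinner_scaleC_right cinner_self_norm c_def)
  then show ?thesis
    using \<open>\<psi> w \<noteq> 0\<close> \<open>w \<noteq> 0\<close> by (simp add: cinner_scaleC_left)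
qed

lemma riesz_representation:
  fixes \<psi> :: "'a::complex_hilbert_space \<Rightarrow> complex"
  assumes add: "\<And>x y. \<psi> (x + y) = \<psi> x + \<psi> y"
    and scale: "\<And>c x. \<psi> (scaleC c x) = cnj c * \<psi> x"
    and bound: "\<And>x. cmod (\<psi> x) \<le> norm x * C"
  obtains z where "\<And>x. \<psi> x = cinner z x"
proof (cases "\<forall>x. \<psi> x = 0")
  case True
  then show thesis using that[of 0] by simp
next
  case False
  then obtain x0 where "\<psi> x0 \<noteq> 0" by blast
  have "bounded_linear \<psi>"
    by (rule bounded_linear_intro[OF add _ bound]) (simp add: scaleR_scaleC scale scaleR_conv_of_real)
  then have "linear \<psi>"
    by (rule bounded_linear.linear)
  define N where "N = {x. \<psi> x = 0}"
  have "closed N"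
    using continuous_closed_preimage_constant[OF linear_continuous_on[OF \<open>bounded_linear \<psi>\<close>]
        closed_UNIV, where a = 0]
    by (simp add: N_def)
  have "csubspace N"
    using linear_0[OF \<open>linear \<psi>\<close>] by (simp add: N_def csubspace_def add scale)
  define w where "w = x0 - proj N x0"
  have "\<psi> (proj N x0) = 0"
    using proj_in[OF \<open>csubspace N\<close> \<open>closed N\<close>] by (simp add: N_def)
  then have "\<psi> w \<noteq> 0"
    using \<open>\<psi> x0 \<noteq> 0\<close> linear_diff[OF \<open>linear \<psi>\<close>] by (simp add: w_def)
  moreover have "cinner w s = 0" if "\<psi> s = 0" for s
    unfolding w_def using that by (intro proj_orthogonal[OF \<open>csubspace N\<close> \<open>closed N\<close>]) (simp add: N_def)
  ultimately show thesis
    using that conj_linear_eq_cinner[OF add scale] by blast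
qed

context
  fixes T :: "'a::complex_hilbert_space \<Rightarrow> 'a"
  assumes T: "bounded_clinear T"
begin

lemma cinner_cadjoint: "cinner (T x) y = cinner x (cadjoint T y)"
proof -
  obtain C where C: "\<And>x. norm (T x) \<le> norm x * C"
    using T by (auto simp: bounded_clinear_def)
  have "\<exists>z. \<forall>x. cinner (T x) y = cinner x z" for y
  proof -
    have "cmod (cinner y (T x)) \<le> norm x * (norm y * C)" for x
      using cinner_cauchy_schwarz[of y "T x"] mult_left_mono[OF C[of x] norm_ge_zero[of y]]
      by (simp add: algebra_simps)
    then obtain z where "\<And>x. cinner y (T x) = cinner z x"
      using riesz_representation[of "\<lambda>x. cinner y (T x)"]
      by (metis T bounded_clinear_add bounded_clinear_scaleC cinner_add_right cinner_scaleC_right)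
    then show ?thesis by (metis cinner_commute)
  qed
  then have "\<exists>S. \<forall>x y. cinner (T x) y = cinner x (S y)" by metis
  then show ?thesis
    unfolding cadjoint_def by (rule someI_ex[where P = "\<lambda>S. \<forall>x y. cinner (T x) y = cinner x (S y)", THEN spec, THEN spec])
qed

lemma cinner_cadjoint_left: "cinner (cadjoint T y) x = cinner y (T x)"
  by (metis cinner_cadjoint cinner_commute)

lemma cadjoint_add: "cadjoint T (x + y) = cadjoint T x + cadjoint T y"
  by (rule cinner_right_ext) (simp add: cinner_cadjoint[symmetric] cinner_add_right)

lemma cadjoint_scaleC: "cadjoint T (scaleC c x) = scaleC c (cadjoint T x)"
  by (rule cinner_right_ext) (simp add: cinner_cadjoint[symmetric] cinner_scaleC_right)

end

section \<open>Operators with closed range\<close>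

lemma approximate_preimages_series:
  fixes K :: "'a::real_normed_vector \<Rightarrow> 'b::real_normed_vector"
  assumes K: "linear K" and "M \<ge> 0"
    and approx: "\<And>y e. y \<in> range K \<Longrightarrow> e > 0 \<Longrightarrow> \<exists>x. norm x \<le> M * norm y \<and> norm (y - K x) < e"
    and "y \<in> range K" "y \<noteq> 0"
  obtains xs where "\<And>k. norm (xs k) \<le> M * norm y * (1/2) ^ k"
    "\<And>k. norm (y - K (\<Sum>i<k. xs i)) \<le> norm y * (1/2) ^ k"
proof -
  obtain A where A: "\<And>y e. y \<in> range K \<Longrightarrow> e > 0 \<Longrightarrow>
      norm (A y e) \<le> M * norm y \<and> norm (y - K (A y e)) < e"
    using approx by metis
  define res where "res = rec_nat y (\<lambda>k r. r - K (A r (norm y * (1/2) ^ Suc k)))"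
  define xs where "xs k = A (res k) (norm y * (1/2) ^ Suc k)" for k
  have res_0: "res 0 = y" and res_Suc: "res (Suc k) = res k - K (xs k)" for k
    by (simp_all add: res_def xs_def)
  have res: "res k \<in> range K \<and> norm (res k) \<le> norm y * (1/2) ^ k" for k
  proof (induction k)
    case 0
    then show ?case using \<open>y \<in> range K\<close> by (simp add: res_0)
  next
    case (Suc k)
    have "res (Suc k) \<in> range K"
      using Suc.IH real_vector.subspace_diff[OF
          real_vector.linear_subspace_image[OF K real_vector.subspace_UNIV]]
      by (simp add: res_Suc)
    moreover have "norm (res (Suc k)) < norm y * (1/2) ^ Suc k"
      using Suc.IH A[of "res k" "norm y * (1/2) ^ Suc k"] \<open>y \<noteq> 0\<close>
      by (simp add: res_Suc xs_def)
    ultimately show ?case by simp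
  qed
  show thesis
  proof
    show "norm (xs k) \<le> M * norm y * (1/2) ^ k" for k
      using A[of "res k" "norm y * (1/2) ^ Suc k"] res[of k] \<open>y \<noteq> 0\<close> \<open>M \<ge> 0\<close>
      by (simp add: xs_def mult.assoc) (meson mult_left_mono order_trans)
    have "res k = y - K (\<Sum>i<k. xs i)" for k
      by (induction k) (simp_all add: res_0 res_Suc linear_add[OF K] linear_0[OF K])
    then show "norm (y - K (\<Sum>i<k. xs i)) \<le> norm y * (1/2) ^ k" for k
      using res by metis
  qed
qed

lemma approximate_preimages_imp_exact:
  fixes K :: "'a::banach \<Rightarrow> 'b::real_normed_vector"
  assumes K: "bounded_linear K" and "M \<ge> 0"
    and approx: "\<And>y e. y \<in> range K \<Longrightarrow> e > 0 \<Longrightarrow> \<exists>x. norm x \<le> M * norm y \<and> norm (y - K x) < e"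
    and y: "y \<in> range K"
  shows "\<exists>x. K x = y \<and> norm x \<le> 2 * M * norm y"
proof (cases "y = 0")
  case True
  then show ?thesis
    by (intro exI[of _ 0]) (simp add: linear_0[OF bounded_linear.linear[OF K]])
next
  case False
  obtain xs where xs: "\<And>k. norm (xs k) \<le> M * norm y * (1/2) ^ k"
    and partial: "\<And>k. norm (y - K (\<Sum>i<k. xs i)) \<le> norm y * (1/2) ^ k"
    using approximate_preimages_series[OF bounded_linear.linear[OF K] \<open>M \<ge> 0\<close> approx y False]
    by blast
  have geometric: "(\<lambda>k. M * norm y * (1/2) ^ k) sums (2 * M * norm y)"
    using sums_mult[OF geometric_sums[of "1/2::real"], of "M * norm y"] by (simp add: mult_ac)
  then have "summable xs"
    using xs by (blast intro: summable_comparison_test' sums_summable)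
  have "norm (suminf xs) \<le> (\<Sum>k. M * norm y * (1/2) ^ k)"
    by (rule norm_suminf_le[OF xs sums_summable[OF geometric]])
  also have "\<dots> = 2 * M * norm y"
    using geometric by (rule sums_unique[symmetric])
  finally have norm_sum: "norm (suminf xs) \<le> 2 * M * norm y" .
  have partial_sums_image: "(\<lambda>k. K (\<Sum>i<k. xs i)) \<longlonglongrightarrow> K (suminf xs)"
    using bounded_linear.sums[OF K summable_sums[OF \<open>summable xs\<close>]]
    unfolding sums_def linear_sum[OF bounded_linear.linear[OF K]] .
  have "(\<lambda>k. y - K (\<Sum>i<k. xs i)) \<longlonglongrightarrow> 0"
    by (rule Lim_null_comparison[OF always_eventually[OF allI[OF partial]]])
      (intro tendsto_mult_right_zero LIMSEQ_power_zero, simp)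
  then have "(\<lambda>k. K (\<Sum>i<k. xs i)) \<longlonglongrightarrow> y"
    using tendsto_diff[OF tendsto_const[of y]] by fastforce
  with partial_sums_image have "K (suminf xs) = y"
    by (rule LIMSEQ_unique)
  with norm_sum show ?thesis by blast
qed

context
  fixes K :: "'a::banach \<Rightarrow> 'b::banach"
  assumes K: "bounded_linear K" and closed_range: "closed (range K)"
begin

lemma subspace_range: "subspace (range K)"
  using real_vector.linear_subspace_image[OF bounded_linear.linear[OF K] real_vector.subspace_UNIV] .

lemma closed_range_image_ball_dense_somewhere:
  obtains n :: nat and y0 r where "y0 \<in> range K" "r > 0"
    "\<And>y. y \<in> range K \<Longrightarrow> dist y y0 < r \<Longrightarrow> y \<in> closure (K ` ball 0 (real n))"
proof -
  define X where "X = top_of_set (range K)"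
  define \<G> where "\<G> = range (\<lambda>n::nat. range K \<inter> closure (K ` ball 0 (real n)))"
  have "\<exists>T\<in>\<G>. X interior_of T \<noteq> {}"
  proof (rule ccontr)
    assume "\<not> ?thesis"
    moreover have "completely_metrizable_space X"
      unfolding X_def
      by (rule completely_metrizable_space_closedin[OF completely_metrizable_space_euclidean])
        (rule closed_range[unfolded closed_closedin])
    moreover have "closedin X T" if "T \<in> \<G>" for T
      using that unfolding X_def \<G>_def by (auto intro: closedin_closed_Int)
    ultimately have "X interior_of \<Union>\<G> = {}"
      by (intro Baire_category_alt) (auto simp: \<G>_def)
    moreover have "range K \<subseteq> \<Union>\<G>"
    proof
      fix y assume "y \<in> range K"
      then obtain x where "y = K x" by blast
      obtain n :: nat where "norm x < real n" using reals_Archimedean2 by blast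
      then have "y \<in> closure (K ` ball 0 (real n))"
        using \<open>y = K x\<close> closure_subset by fastforce
      then show "y \<in> \<Union>\<G>" unfolding \<G>_def using \<open>y = K x\<close> by blast
    qed
    then have "\<Union>\<G> = topspace X" unfolding X_def \<G>_def by auto
    ultimately show False
      using interior_of_topspace[of X] unfolding X_def by auto
  qed
  then obtain n y0 U where n: "U \<subseteq> range K \<inter> closure (K ` ball 0 (real n))"
    and U: "openin X U" "y0 \<in> U"
    unfolding \<G>_def interior_of_def by blast
  then obtain r where "r > 0" "\<And>y. y \<in> range K \<Longrightarrow> dist y y0 < r \<Longrightarrow> y \<in> U"
    unfolding X_def openin_euclidean_subtopology_iff by blast
  then show thesis
    using that[of y0 r n] U n by blast
qed

lemma closed_range_small_preimages:
  obtains n :: nat and r where "r > 0"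
    "\<And>y e. y \<in> range K \<Longrightarrow> norm y < r \<Longrightarrow> e > 0 \<Longrightarrow> \<exists>x. norm x < 2 * real n \<and> dist (K x) y < e"
proof -
  obtain y0 r n where y0: "y0 \<in> range K" and "r > 0"
    and dense: "\<And>y. y \<in> range K \<Longrightarrow> dist y y0 < r \<Longrightarrow> y \<in> closure (K ` ball 0 (real n))"
    using closed_range_image_ball_dense_somewhere by metis
  have "\<exists>x. norm x < 2 * real n \<and> dist (K x) y < e"
    if y: "y \<in> range K" "norm y < r" and "e > 0" for y e
  proof -
    have "y0 + y \<in> range K"
      using y0 y(1) by (rule real_vector.subspace_add[OF subspace_range])
    then have "y0 + y \<in> closure (K ` ball 0 (real n))"
      using dense y(2) by (simp add: dist_norm)
    then obtain x1 where x1: "norm x1 < real n" "dist (K x1) (y0 + y) < e / 2"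
      unfolding closure_approachable using \<open>e > 0\<close> by (auto dest!: spec[of _ "e / 2"])
    obtain x2 where x2: "norm x2 < real n" "dist (K x2) y0 < e / 2"
      using dense[OF y0] \<open>r > 0\<close> \<open>e > 0\<close> unfolding closure_approachable
      by (auto dest!: spec[of _ "e / 2"])
    have "K (x1 - x2) - y = (K x1 - (y0 + y)) - (K x2 - y0)"
      by (simp add: linear_diff[OF bounded_linear.linear[OF K]])
    then have "norm (K (x1 - x2) - y) \<le> norm (K x1 - (y0 + y)) + norm (K x2 - y0)"
      by (metis norm_triangle_ineq4)
    then have "dist (K (x1 - x2)) y < e"
      using x1(2) x2(2) by (simp add: dist_norm)
    moreover have "norm (x1 - x2) < 2 * real n"
      using x1(1) x2(1) norm_triangle_ineq4[of x1 x2] by linarith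
    ultimately show ?thesis by blast
  qed
  then show thesis using that \<open>r > 0\<close> by blast
qed

lemma closed_range_approx_preimage:
  obtains M where "M \<ge> 0"
    "\<And>y e. y \<in> range K \<Longrightarrow> e > 0 \<Longrightarrow> \<exists>x. norm x \<le> M * norm y \<and> norm (y - K x) < e"
proof -
  obtain n r where "r > 0" and small:
    "\<And>y e. y \<in> range K \<Longrightarrow> norm y < r \<Longrightarrow> e > 0 \<Longrightarrow> \<exists>x. norm x < 2 * real n \<and> dist (K x) y < e"
    using closed_range_small_preimages by metis
  define M where "M = 4 * real n / r"
  have "\<exists>x. norm x \<le> M * norm y \<and> norm (y - K x) < e"
    if y: "y \<in> range K" and "e > 0" for y e
  proof (cases "y = 0")
    case True
    then show ?thesis
      using \<open>e > 0\<close> by (intro exI[of _ 0]) (simp add: linear_0[OF bounded_linear.linear[OF K]])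
  next
    case False
    define a where "a = r / (2 * norm y)"
    have "a > 0" using False \<open>r > 0\<close> by (simp add: a_def)
    have "scaleR a y \<in> range K"
      using y by (rule real_vector.subspace_scale[OF subspace_range])
    moreover have "norm (scaleR a y) < r"
      using \<open>a > 0\<close> False \<open>r > 0\<close> by (simp add: a_def)
    ultimately obtain x' where x': "norm x' < 2 * real n" "dist (K x') (scaleR a y) < e * a"
      using small \<open>e > 0\<close> \<open>a > 0\<close> by (meson mult_pos_pos)
    have "norm (scaleR (1 / a) x') \<le> M * norm y"
      using x'(1) \<open>a > 0\<close> False \<open>r > 0\<close>
      by (simp add: a_def M_def field_simps)
    moreover have "y - K (scaleR (1 / a) x') = scaleR (1 / a) (scaleR a y - K x')"
      using \<open>a > 0\<close> by (simp add: linear_cmul[OF bounded_linear.linear[OF K]] algebra_simps)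
    then have "norm (y - K (scaleR (1 / a) x')) < e"
      using x'(2) \<open>a > 0\<close> by (simp add: dist_norm norm_minus_commute pos_divide_less_eq)
    ultimately show ?thesis by blast
  qed
  moreover have "M \<ge> 0" using \<open>r > 0\<close> by (simp add: M_def)
  ultimately show thesis using that by blast
qed

lemma closed_range_bounded_preimage:
  obtains C where "\<And>y. y \<in> range K \<Longrightarrow> \<exists>x. K x = y \<and> norm x \<le> C * norm y"
proof -
  obtain M where "M \<ge> 0"
    and approx: "\<And>y e. y \<in> range K \<Longrightarrow> e > 0 \<Longrightarrow> \<exists>x. norm x \<le> M * norm y \<and> norm (y - K x) < e"
    using closed_range_approx_preimage by metis
  show thesis
    using that[of "2 * M"] approximate_preimages_imp_exact[OF K \<open>M \<ge> 0\<close> approx] by blast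
qed

end

section \<open>The Moore--Penrose inverse\<close>

lemma csubspace_range_bounded_clinear:
  assumes "bounded_clinear K"
  shows "csubspace (range K)"
  unfolding csubspace_def
proof (intro conjI ballI allI)
  show "0 \<in> range K"
    using bounded_clinear_zero[OF assms] by (metis rangeI)
  show "x + y \<in> range K" if "x \<in> range K" "y \<in> range K" for x y
    using that by (auto simp flip: bounded_clinear_add[OF assms])
  show "scaleC c x \<in> range K" if "x \<in> range K" for c x
    using that by (auto simp flip: bounded_clinear_scaleC[OF assms])
qed

lemma csubspace_kernel_bounded_clinear: "bounded_clinear K \<Longrightarrow> csubspace {x. K x = 0}"
  by (simp add: csubspace_def bounded_clinear_add bounded_clinear_scaleC bounded_clinear_zero)

lemma closed_kernel_bounded_clinear: "bounded_clinear K \<Longrightarrow> closed {x. K x = 0}"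
  using continuous_closed_preimage_constant[OF
      linear_continuous_on[OF bounded_clinear_imp_bounded_linear] closed_UNIV, where a = 0]
  by simp

locale closed_range_operator =
  fixes K :: "'a::complex_hilbert_space \<Rightarrow> 'a"
  assumes bounded: "bounded_clinear K" and closed_range: "closed (range K)"
begin

definition null_space :: "'a set" where
  "null_space = {x. K x = 0}"

definition pinv :: "'a \<Rightarrow> 'a" where
  "pinv y = (let x = (SOME x. K x = proj (range K) y) in x - proj null_space x)"

lemma csubspace_range: "csubspace (range K)"
  by (rule csubspace_range_bounded_clinear[OF bounded])

lemma csubspace_null_space: "csubspace null_space"
  unfolding null_space_def by (rule csubspace_kernel_bounded_clinear[OF bounded])

lemma closed_null_space: "closed null_space"
  unfolding null_space_def by (rule closed_kernel_bounded_clinear[OF bounded])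

lemmas proj_range = proj_in[OF csubspace_range closed_range]
  proj_orthogonal[OF csubspace_range closed_range]
  proj_unique[OF csubspace_range closed_range]

lemmas proj_null_space = proj_in[OF csubspace_null_space closed_null_space]
  proj_orthogonal[OF csubspace_null_space closed_null_space]

lemma K_proj_null_space [simp]: "K (proj null_space x) = 0"
  using proj_null_space(1) by (simp add: null_space_def)

lemma K_pinv: "K (pinv y) = proj (range K) y"
proof -
  define x where "x = (SOME x. K x = proj (range K) y)"
  have "K x = proj (range K) y"
    unfolding x_def by (rule someI_ex) (metis proj_range(1) rangeE)
  then show ?thesis
    by (simp add: pinv_def x_def[symmetric] bounded_clinear_diff[OF bounded])
qed

lemma pinv_orthogonal: "n \<in> null_space \<Longrightarrow> cinner (pinv y) n = 0"
  unfolding pinv_def Let_def by (rule proj_null_space(2))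

lemma orthogonal_null_space_eqI:
  assumes "\<And>n. n \<in> null_space \<Longrightarrow> cinner z1 n = 0" "\<And>n. n \<in> null_space \<Longrightarrow> cinner z2 n = 0"
    and "K z1 = K z2"
  shows "z1 = z2"
proof -
  have "z1 - z2 \<in> null_space"
    using assms(3) by (simp add: null_space_def bounded_clinear_diff[OF bounded])
  then have "cinner (z1 - z2) (z1 - z2) = 0"
    using assms(1,2) by (simp add: cinner_diff_left)
  then show ?thesis by simp
qed

lemma pinv_add: "pinv (x + y) = pinv x + pinv y"
  by (rule orthogonal_null_space_eqI)
    (simp_all add: pinv_orthogonal cinner_add_left K_pinv bounded_clinear_add[OF bounded]
      proj_add[OF csubspace_range closed_range])

lemma pinv_scaleC: "pinv (scaleC c x) = scaleC c (pinv x)"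
  by (rule orthogonal_null_space_eqI)
    (simp_all add: pinv_orthogonal cinner_scaleC_left K_pinv bounded_clinear_scaleC[OF bounded]
      proj_scaleC[OF csubspace_range closed_range])

lemma norm_le_norm_K_orthogonal:
  obtains C where "C \<ge> 0"
    "\<And>z. (\<And>n. n \<in> null_space \<Longrightarrow> cinner z n = 0) \<Longrightarrow> norm z \<le> C * norm (K z)"
proof -
  obtain C where C: "\<And>y. y \<in> range K \<Longrightarrow> \<exists>x. K x = y \<and> norm x \<le> C * norm y"
    using closed_range_bounded_preimage[OF bounded_clinear_imp_bounded_linear[OF bounded] closed_range]
    by metis
  have "norm z \<le> max C 0 * norm (K z)" if z: "\<And>n. n \<in> null_space \<Longrightarrow> cinner z n = 0" for z
  proof -
    obtain x where x: "K x = K z" "norm x \<le> C * norm (K z)"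
      using C[of "K z"] by blast
    have "x - z \<in> null_space"
      using x(1) by (simp add: null_space_def bounded_clinear_diff[OF bounded])
    then have "(norm x)\<^sup>2 = (norm z)\<^sup>2 + (norm (x - z))\<^sup>2"
      using pythagoras[of z "x - z"] z by simp
    then have "norm z \<le> norm x"
      by (metis le_add_same_cancel1 norm_ge_zero power2_le_imp_le zero_le_power2)
    also have "\<dots> \<le> max C 0 * norm (K z)"
      using x(2) by (meson max.cobounded1 mult_right_mono norm_ge_zero order_trans)
    finally show ?thesis .
  qed
  then show thesis
    using that[of "max C 0"] by simp
qed

lemma bounded_clinear_pinv: "bounded_clinear pinv"
proof -
  obtain C where "C \<ge> 0"
    and C: "\<And>z. (\<And>n. n \<in> null_space \<Longrightarrow> cinner z n = 0) \<Longrightarrow> norm z \<le> C * norm (K z)"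
    using norm_le_norm_K_orthogonal by metis
  have "norm (pinv y) \<le> norm y * C" for y
  proof -
    have "norm (pinv y) \<le> C * norm (proj (range K) y)"
      using C[OF pinv_orthogonal] by (simp add: K_pinv)
    also have "\<dots> \<le> C * norm y"
      using mult_left_mono[OF proj_norm_le[OF csubspace_range closed_range] \<open>C \<ge> 0\<close>] .
    finally show ?thesis by (simp add: mult.commute)
  qed
  then show ?thesis
    unfolding bounded_clinear_def using pinv_add pinv_scaleC by blast
qed

lemma K_pinv_K: "K (pinv (K x)) = K x"
  by (simp add: K_pinv proj_fixed[OF csubspace_range closed_range])

lemma pinv_K: "pinv (K x) = x - proj null_space x"
  by (rule orthogonal_null_space_eqI)
    (simp_all add: pinv_orthogonal proj_null_space(2) K_pinv_K bounded_clinear_diff[OF bounded])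

lemma pinv_K_pinv: "pinv (K (pinv y)) = pinv y"
  by (rule orthogonal_null_space_eqI) (simp_all add: pinv_orthogonal K_pinv_K)

lemma selfadjoint_K_pinv: "selfadjoint_op (K \<circ> pinv)"
  unfolding selfadjoint_op_def
  by (simp add: K_pinv proj_selfadjoint[OF csubspace_range closed_range])

lemma selfadjoint_pinv_K: "selfadjoint_op (pinv \<circ> K)"
  unfolding selfadjoint_op_def
  by (simp add: pinv_K cinner_diff_left cinner_diff_right
      proj_selfadjoint[OF csubspace_null_space closed_null_space])

lemma cinner_pinv_K: "cinner (pinv (K x)) y = cinner x (pinv (K y))"
  using selfadjoint_pinv_K by (simp add: selfadjoint_op_def)

lemma norm_pinv_K_le: "norm (pinv (K x)) \<le> norm x"
proof -
  have "cinner (x - proj null_space x) (proj null_space x) = 0"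
    by (rule proj_null_space(2)[OF proj_null_space(1)])
  then have "(norm x)\<^sup>2 = (norm (pinv (K x)))\<^sup>2 + (norm (proj null_space x))\<^sup>2"
    using pythagoras[of "x - proj null_space x" "proj null_space x"] by (simp add: pinv_K)
  then show ?thesis
    by (metis le_add_same_cancel1 norm_ge_zero power2_le_imp_le zero_le_power2)
qed

lemma penrose_unique:
  assumes X: "bounded_clinear X" "K \<circ> X \<circ> K = K" "X \<circ> K \<circ> X = X"
    "selfadjoint_op (K \<circ> X)" "selfadjoint_op (X \<circ> K)"
  shows "X = pinv"
proof
  fix y
  have KXK: "K (X (K z)) = K z" and XKX: "X (K (X z)) = X z" for z
    using fun_cong[OF X(2), of z] fun_cong[OF X(3), of z] by simp_all
  have K_X: "proj (range K) y = K (X y)"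
  proof (rule proj_range(3))
    fix s
    assume "s \<in> range K"
    then obtain z where "s = K z" by blast
    have "cinner (K (X y)) (K z) = cinner y (K (X (K z)))"
      using X(4) unfolding selfadjoint_op_def comp_apply by blast
    then show "cinner (y - K (X y)) s = 0"
      by (simp add: \<open>s = K z\<close> cinner_diff_left KXK)
  qed (rule rangeI)
  have X_orthogonal: "cinner (X y) n = 0" if "n \<in> null_space" for n
  proof -
    have "cinner (X y) n = cinner (X (K (X y))) n" by (simp only: XKX)
    also have "\<dots> = cinner (X y) (X (K n))"
      using X(5) unfolding selfadjoint_op_def comp_apply by blast
    finally show ?thesis
      using that bounded_clinear_zero[OF X(1)] by (simp add: null_space_def)
  qed
  have "K (X y) = K (pinv y)"
    using K_X K_pinv[of y] by simp
  then show "X y = pinv y"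
    using orthogonal_null_space_eqI[of "X y" "pinv y"] X_orthogonal pinv_orthogonal by blast
qed

lemma moore_penrose_eq_pinv: "moore_penrose K = pinv"
  unfolding moore_penrose_def
proof (rule the_equality)
  show "bounded_clinear pinv \<and> K \<circ> pinv \<circ> K = K \<and> pinv \<circ> K \<circ> pinv = pinv \<and>
        selfadjoint_op (K \<circ> pinv) \<and> selfadjoint_op (pinv \<circ> K)"
    by (simp add: fun_eq_iff bounded_clinear_pinv K_pinv_K pinv_K_pinv selfadjoint_K_pinv
        selfadjoint_pinv_K)
qed (use penrose_unique in blast)

end

section \<open>Weakly square-integrable families\<close>

lemma borel_measurable_cnj [measurable]: "cnj \<in> borel_measurable borel"
  by (intro borel_measurable_continuous_onI continuous_intros)

lemma integrable_cmod_square: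
  fixes u :: "'o \<Rightarrow> complex"
  assumes "u \<in> borel_measurable M" "(\<integral>\<^sup>+\<omega>. ennreal ((cmod (u \<omega>))\<^sup>2) \<partial>M) < \<infinity>"
  shows "integrable M (\<lambda>\<omega>. (cmod (u \<omega>))\<^sup>2)"
  using assms by (simp add: integrable_iff_bounded)

lemma integrable_mult_of_square_integrable:
  fixes u v :: "'o \<Rightarrow> complex"
  assumes [measurable]: "u \<in> borel_measurable M" "v \<in> borel_measurable M"
    and "(\<integral>\<^sup>+\<omega>. ennreal ((cmod (u \<omega>))\<^sup>2) \<partial>M) < \<infinity>"
    and "(\<integral>\<^sup>+\<omega>. ennreal ((cmod (v \<omega>))\<^sup>2) \<partial>M) < \<infinity>"
  shows "integrable M (\<lambda>\<omega>. u \<omega> * v \<omega>)"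
proof (rule Bochner_Integration.integrable_bound)
  show "integrable M (\<lambda>\<omega>. (cmod (u \<omega>))\<^sup>2 + (cmod (v \<omega>))\<^sup>2)"
    using assms by (intro Bochner_Integration.integrable_add integrable_cmod_square)
  have "cmod (u \<omega>) * cmod (v \<omega>) \<le> (cmod (u \<omega>))\<^sup>2 + (cmod (v \<omega>))\<^sup>2" for \<omega>
    using sum_squares_bound[of "cmod (u \<omega>)" "cmod (v \<omega>)"]
      mult_nonneg_nonneg[OF norm_ge_zero norm_ge_zero, of "u \<omega>" "v \<omega>"]
    by linarith
  then show "AE \<omega> in M. norm (u \<omega> * v \<omega>) \<le> norm ((cmod (u \<omega>))\<^sup>2 + (cmod (v \<omega>))\<^sup>2)"
    by (simp add: norm_mult)
qed simp

definition weakly_L2 :: "'o measure \<Rightarrow> ('o \<Rightarrow> 'h::complex_inner_space) \<Rightarrow> bool" where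
  "weakly_L2 M A \<longleftrightarrow> (\<forall>f. (\<lambda>\<omega>. cinner f (A \<omega>)) \<in> borel_measurable M \<and>
      (\<integral>\<^sup>+\<omega>. ennreal ((cmod (cinner f (A \<omega>)))\<^sup>2) \<partial>M) < \<infinity>)"

definition cross_form :: "'o measure \<Rightarrow> ('o \<Rightarrow> 'h::complex_inner_space) \<Rightarrow> ('o \<Rightarrow> 'h) \<Rightarrow> 'h \<Rightarrow> 'h \<Rightarrow> complex"
  where "cross_form M A B f h = (LINT \<omega>|M. cinner f (A \<omega>) * cinner (B \<omega>) h)"

lemma cinner_swap_fun: "(\<lambda>\<omega>. cinner (A \<omega>) h) = (\<lambda>\<omega>. cnj (cinner h (A \<omega>)))"
  by (simp add: fun_eq_iff cinner_commute[of _ h])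

lemma weakly_L2D:
  assumes "weakly_L2 M A"
  shows "(\<lambda>\<omega>. cinner f (A \<omega>)) \<in> borel_measurable M"
    and "(\<lambda>\<omega>. cinner (A \<omega>) f) \<in> borel_measurable M"
    and "(\<integral>\<^sup>+\<omega>. ennreal ((cmod (cinner f (A \<omega>)))\<^sup>2) \<partial>M) < \<infinity>"
    and "(\<integral>\<^sup>+\<omega>. ennreal ((cmod (cinner (A \<omega>) f))\<^sup>2) \<partial>M) < \<infinity>"
proof -
  show m: "(\<lambda>\<omega>. cinner f (A \<omega>)) \<in> borel_measurable M" for f
    using assms by (simp add: weakly_L2_def)
  show "(\<lambda>\<omega>. cinner (A \<omega>) f) \<in> borel_measurable M"
    unfolding cinner_swap_fun using m[of f] by measurable
  show i: "(\<integral>\<^sup>+\<omega>. ennreal ((cmod (cinner f (A \<omega>)))\<^sup>2) \<partial>M) < \<infinity>" for f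
    using assms by (simp add: weakly_L2_def)
  show "(\<integral>\<^sup>+\<omega>. ennreal ((cmod (cinner (A \<omega>) f))\<^sup>2) \<partial>M) < \<infinity>"
    using i[of f] by (simp add: cinner_commute[of "A _" f])
qed

lemma cont_bessel_imp_weakly_L2:
  assumes "cont_bessel M G"
  shows "weakly_L2 M G"
proof -
  obtain B where B: "\<And>f. (\<integral>\<^sup>+\<omega>. ennreal ((cmod (cinner f (G \<omega>)))\<^sup>2) \<partial>M) \<le> ennreal (B * (norm f)\<^sup>2)"
    using assms unfolding cont_bessel_def by blast
  show ?thesis
    using assms le_less_trans[OF B ennreal_less_top]
    unfolding cont_bessel_def weakly_L2_def weakly_measurable_def by auto
qed

context
  fixes M :: "'o measure" and A B :: "'o \<Rightarrow> 'h::complex_inner_space"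
  assumes A: "weakly_L2 M A" and B: "weakly_L2 M B"
begin

lemma integrable_cross_form: "integrable M (\<lambda>\<omega>. cinner f (A \<omega>) * cinner (B \<omega>) h)"
  by (rule integrable_mult_of_square_integrable) (use weakly_L2D[OF A] weakly_L2D[OF B] in auto)

lemma cross_form_add_right: "cross_form M A B f (h1 + h2) = cross_form M A B f h1 + cross_form M A B f h2"
  unfolding cross_form_def
  by (simp add: cinner_add_right distrib_left integrable_cross_form)

lemma cross_form_cong_AE:
  assumes "weakly_L2 M A'" "weakly_L2 M B'"
    and "AE \<omega> in M. A \<omega> = A' \<omega>" "AE \<omega> in M. B \<omega> = B' \<omega>"
  shows "cross_form M A B f h = cross_form M A' B' f h"
  unfolding cross_form_def
  by (rule integral_cong_AE)
    (use weakly_L2D[OF A] weakly_L2D[OF B] weakly_L2D[OF assms(1)] weakly_L2D[OF assms(2)]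
      assms(3,4) in \<open>auto elim: AE_mp\<close>)

end

lemma cross_form_scaleC_right: "cross_form M A B f (scaleC c h) = cnj c * cross_form M A B f h"
  by (simp add: cross_form_def cinner_scaleC_right mult.left_commute)

lemma cross_form_cnj: "cross_form M A B f h = cnj (cross_form M B A h f)"
proof -
  have "cnj (cross_form M B A h f) = (LINT \<omega>|M. cnj (cinner h (B \<omega>) * cinner (A \<omega>) f))"
    unfolding cross_form_def by (simp only: Bochner_Integration.integral_cnj)
  also have "\<dots> = cross_form M A B f h"
    unfolding cross_form_def
    by (rule Bochner_Integration.integral_cong[OF refl])
      (simp add: cinner_commute[of "B _" h] cinner_commute[of "A _" f])
  finally show ?thesis by simp
qed

lemma cross_form_add_left:
  "weakly_L2 M A \<Longrightarrow> weakly_L2 M B \<Longrightarrow>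
    cross_form M A B (f1 + f2) h = cross_form M A B f1 h + cross_form M A B f2 h"
  using cross_form_add_right[of M B A h f1 f2] by (simp add: cross_form_cnj[of M A B])

lemma cross_form_scaleC_left: "cross_form M A B (scaleC c f) h = c * cross_form M A B f h"
  using cross_form_scaleC_right[of M B A h c f] by (simp add: cross_form_cnj[of M A B])

lemma cross_form_diagonal:
  "cross_form M A A f f = complex_of_real (LINT \<omega>|M. (cmod (cinner f (A \<omega>)))\<^sup>2)"
  unfolding cross_form_def integral_complex_of_real[symmetric]
  by (simp add: cinner_commute[of "A _" f] flip: complex_norm_square)

lemma mult_le_weighted_sum_squares:
  fixes x y a :: real
  assumes "a > 0"
  shows "x * y \<le> (a * x\<^sup>2 + y\<^sup>2 / a) / 2"
proof -
  have "x * y * (2 * a) \<le> (a * x)\<^sup>2 + y\<^sup>2"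
    using sum_squares_bound[of "a * x" y] by (simp add: algebra_simps)
  then show ?thesis
    using assms by (simp add: field_simps power2_eq_square)
qed

lemma integral_le_of_nn_integral_le:
  assumes "u \<in> borel_measurable M" "\<And>x. u x \<ge> 0"
    and "(\<integral>\<^sup>+x. ennreal (u x) \<partial>M) \<le> ennreal c" "c \<ge> 0"
  shows "(LINT x|M. u x) \<le> c"
proof -
  have "integrable M u"
    using assms by (auto simp: integrable_iff_bounded intro: le_less_trans)
  then have "ennreal (LINT x|M. u x) = (\<integral>\<^sup>+x. ennreal (u x) \<partial>M)"
    using assms(2) by (simp add: nn_integral_eq_integral)
  then have "ennreal (LINT x|M. u x) \<le> ennreal c"
    using assms(3) by simp
  then show ?thesis
    using assms(4) by (simp add: ennreal_le_iff)
qed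

lemma cross_form_bounded:
  assumes A: "weakly_L2 M A" and B: "cont_bessel M B"
  obtains C where "\<And>h. cmod (cross_form M A B f h) \<le> norm h * C"
proof -
  obtain Bc where "Bc > 0"
    and Bc: "\<And>h. (\<integral>\<^sup>+\<omega>. ennreal ((cmod (cinner h (B \<omega>)))\<^sup>2) \<partial>M) \<le> ennreal (Bc * (norm h)\<^sup>2)"
    using B unfolding cont_bessel_def by blast
  note B' = cont_bessel_imp_weakly_L2[OF B]
  define U where "U = (LINT \<omega>|M. (cmod (cinner f (A \<omega>)))\<^sup>2)"
  have int_A: "integrable M (\<lambda>\<omega>. (cmod (cinner f (A \<omega>)))\<^sup>2)"
    and int_B: "\<And>h. integrable M (\<lambda>\<omega>. (cmod (cinner h (B \<omega>)))\<^sup>2)"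
    using weakly_L2D[OF A] weakly_L2D[OF B'] by (simp_all add: integrable_cmod_square)
  have "cmod (cross_form M A B f h) \<le> norm h * ((U + Bc) / 2)" for h
  proof (cases "h = 0")
    case False
    let ?a = "norm h"
    have "?a > 0" using False by simp
    have "cmod (cross_form M A B f h) \<le> (LINT \<omega>|M. norm (cinner f (A \<omega>) * cinner (B \<omega>) h))"
      unfolding cross_form_def by (rule integral_norm_bound)
    also have "\<dots> \<le> (LINT \<omega>|M. (?a * (cmod (cinner f (A \<omega>)))\<^sup>2 + (cmod (cinner h (B \<omega>)))\<^sup>2 / ?a) / 2)"
      using int_A int_B mult_le_weighted_sum_squares[OF \<open>?a > 0\<close>]
      by (intro integral_mono integrable_norm integrable_cross_form[OF A B'])
        (simp_all add: norm_mult cinner_commute[of "B _" h])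
    also have "\<dots> = (?a * U + (LINT \<omega>|M. (cmod (cinner h (B \<omega>)))\<^sup>2) / ?a) / 2"
      using int_A int_B by (simp add: U_def)
    also have "\<dots> \<le> (?a * U + Bc * ?a\<^sup>2 / ?a) / 2"
      using integral_le_of_nn_integral_le[OF _ _ Bc] weakly_L2D(1)[OF B'] \<open>Bc > 0\<close> \<open>?a > 0\<close>
      by (simp add: divide_right_mono)
    also have "\<dots> = norm h * ((U + Bc) / 2)"
      using \<open>?a > 0\<close> by (simp add: field_simps power2_eq_square)
    finally show ?thesis .
  qed (simp add: cross_form_def)
  then show thesis by (rule that)
qed

lemma cinner_analysis_adj:
  fixes A B :: "'o \<Rightarrow> 'h::complex_hilbert_space"
  assumes A: "weakly_L2 M A" and B: "cont_bessel M B"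
  shows "cinner (analysis_adj M B (analysis_op A f)) h = cross_form M A B f h"
proof -
  have l2: "l2_inner M (analysis_op A f) (analysis_op B h) = cross_form M A B f h" for h
    by (simp add: l2_inner_def analysis_op_def cross_form_def cinner_commute[of "B _" h])
  obtain C where C: "\<And>h. cmod (cross_form M A B f h) \<le> norm h * C"
    using cross_form_bounded[OF A B] by metis
  obtain z where z: "\<And>h. cross_form M A B f h = cinner z h"
    using riesz_representation[OF cross_form_add_right[OF A cont_bessel_imp_weakly_L2[OF B]]
        cross_form_scaleC_right C] by metis
  have "analysis_adj M B (analysis_op A f) = z"
    unfolding analysis_adj_def
  proof (rule the_equality)
    show "\<forall>h. cinner z h = l2_inner M (analysis_op A f) (analysis_op B h)"
      by (simp add: z l2)
    show "x = z" if "\<forall>h. cinner x h = l2_inner M (analysis_op A f) (analysis_op B h)" for x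
      using that by (intro cinner_left_ext) (simp add: z l2)
  qed
  then show ?thesis by (simp add: z)
qed

definition sesquilinear :: "('a::complex_inner_space \<Rightarrow> 'a \<Rightarrow> complex) \<Rightarrow> bool" where
  "sesquilinear s \<longleftrightarrow>
     (\<forall>x y z. s (x + y) z = s x z + s y z) \<and> (\<forall>x y z. s x (y + z) = s x y + s x z) \<and>
     (\<forall>c x y. s (scaleC c x) y = c * s x y) \<and> (\<forall>c x y. s x (scaleC c y) = cnj c * s x y)"

lemma sesquilinear_polarization:
  assumes "sesquilinear s"
  shows "2 * s x y = (s (x + y) (x + y) - s x x - s y y)
    + \<i> * (s (x + scaleC \<i> y) (x + scaleC \<i> y) - s x x - s y y)"
  using assms unfolding sesquilinear_def by (simp add: algebra_simps)

lemma sesquilinear_eq_if_diagonal_eq: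
  assumes "sesquilinear s1" "sesquilinear s2" "\<And>x. s1 x x = s2 x x"
  shows "s1 x y = s2 x y"
proof -
  have "2 * s1 x y = 2 * s2 x y"
    unfolding sesquilinear_polarization[OF assms(1)] sesquilinear_polarization[OF assms(2)] assms(3) ..
  then show ?thesis by simp
qed

lemma sesquilinear_cross_form: "weakly_L2 M A \<Longrightarrow> weakly_L2 M B \<Longrightarrow> sesquilinear (cross_form M A B)"
  by (simp add: sesquilinear_def cross_form_add_left cross_form_add_right cross_form_scaleC_left
      cross_form_scaleC_right)

lemma cmod_cinner_diff_square:
  "complex_of_real ((cmod (cinner f x - cinner f y))\<^sup>2)
    = cinner f x * cinner x f - cinner f x * cinner y f - cinner f y * cinner x f + cinner f y * cinner y f"
  using complex_norm_square[of "cinner f x - cinner f y"]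
  by (simp add: cinner_commute[of x f] cinner_commute[of y f] algebra_simps)

lemma integral_cmod_diff_square:
  assumes A: "weakly_L2 M A" and B: "weakly_L2 M B"
  shows "integrable M (\<lambda>\<omega>. (cmod (cinner f (A \<omega>) - cinner f (B \<omega>)))\<^sup>2)"
    and "complex_of_real (LINT \<omega>|M. (cmod (cinner f (A \<omega>) - cinner f (B \<omega>)))\<^sup>2)
      = cross_form M A A f f - cross_form M A B f f - cross_form M B A f f + cross_form M B B f f"
proof -
  have "integrable M (\<lambda>\<omega>. complex_of_real ((cmod (cinner f (A \<omega>) - cinner f (B \<omega>)))\<^sup>2))"
    unfolding cmod_cinner_diff_square by (simp add: integrable_cross_form A B)
  then show "integrable M (\<lambda>\<omega>. (cmod (cinner f (A \<omega>) - cinner f (B \<omega>)))\<^sup>2)"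
    by (simp only: complex_of_real_integrable_eq)
  show "complex_of_real (LINT \<omega>|M. (cmod (cinner f (A \<omega>) - cinner f (B \<omega>)))\<^sup>2)
      = cross_form M A A f f - cross_form M A B f f - cross_form M B A f f + cross_form M B B f f"
    unfolding cross_form_def integral_complex_of_real[symmetric] cmod_cinner_diff_square
    by (simp add: integrable_cross_form A B)
qed

lemma AE_eq_if_AE_cinner_eq:
  fixes A B :: "'o \<Rightarrow> 'h::complex_hilbert_space"
  assumes "separable_hilbert TYPE('h)" and "\<And>f. AE \<omega> in M. cinner f (A \<omega>) = cinner f (B \<omega>)"
  shows "AE \<omega> in M. A \<omega> = B \<omega>"
proof -
  obtain D :: "'h set" where "countable D" "closure D = UNIV"
    using assms(1) unfolding separable_hilbert_def separable_space_def euclidean_closure_of by auto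
  have "AE \<omega> in M. \<forall>d\<in>D. cinner d (A \<omega>) = cinner d (B \<omega>)"
    using assms(2) by (simp add: AE_ball_countable[OF \<open>countable D\<close>])
  then show ?thesis
  proof eventually_elim
    case (elim \<omega>)
    then have "A \<omega> - B \<omega> = 0"
      by (intro cinner_dense_eq_zero[OF \<open>closure D = UNIV\<close>]) (simp add: cinner_diff_right)
    then show ?case by simp
  qed
qed

lemma AE_eq_if_cross_forms_agree:
  fixes A B :: "'o \<Rightarrow> 'h::complex_hilbert_space"
  assumes "separable_hilbert TYPE('h)" and A: "weakly_L2 M A" and B: "weakly_L2 M B"
    and "\<And>f. cross_form M A A f f = cross_form M B B f f"
    and "\<And>f. cross_form M A B f f = cross_form M B B f f"
    and "\<And>f. cross_form M B A f f = cross_form M B B f f"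
  shows "AE \<omega> in M. A \<omega> = B \<omega>"
proof (rule AE_eq_if_AE_cinner_eq[OF assms(1)])
  fix f
  let ?d = "\<lambda>\<omega>. (cmod (cinner f (A \<omega>) - cinner f (B \<omega>)))\<^sup>2"
  have "complex_of_real (LINT \<omega>|M. ?d \<omega>) = 0"
    by (simp add: integral_cmod_diff_square(2)[OF A B] assms(4-6))
  then have "AE \<omega> in M. ?d \<omega> = 0"
    using integral_nonneg_eq_0_iff_AE[OF integral_cmod_diff_square(1)[OF A B]] by simp
  then show "AE \<omega> in M. cinner f (A \<omega>) = cinner f (B \<omega>)"
    by eventually_elim simp
qed

section \<open>Parseval \<open>K\<close>-frames and the canonical dual\<close>

locale parseval_K_frame = closed_range_operator K for K :: "'h::complex_hilbert_space \<Rightarrow> 'h" +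
  fixes M :: "'o measure" and F :: "'o \<Rightarrow> 'h"
  assumes parseval: "parseval_cont_K_frame M K F"
begin

lemma weakly_L2_frame: "weakly_L2 M F"
  using parseval by (simp add: parseval_cont_K_frame_def weakly_L2_def weakly_measurable_def)

lemma integral_frame_square: "(LINT \<omega>|M. (cmod (cinner f (F \<omega>)))\<^sup>2) = (norm (cadjoint K f))\<^sup>2"
proof -
  have "ennreal (LINT \<omega>|M. (cmod (cinner f (F \<omega>)))\<^sup>2) = (\<integral>\<^sup>+\<omega>. ennreal ((cmod (cinner f (F \<omega>)))\<^sup>2) \<partial>M)"
    using weakly_L2D[OF weakly_L2_frame]
    by (simp add: nn_integral_eq_integral integrable_cmod_square)
  then show ?thesis
    using parseval by (simp add: parseval_cont_K_frame_def)
qed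

lemma cross_form_frame: "cross_form M F F g h = cinner (cadjoint K g) (cadjoint K h)"
proof -
  have "sesquilinear (cross_form M F F)"
    by (rule sesquilinear_cross_form[OF weakly_L2_frame weakly_L2_frame])
  moreover have "sesquilinear (\<lambda>g h. cinner (cadjoint K g) (cadjoint K h))"
    by (simp add: sesquilinear_def cadjoint_add[OF bounded] cadjoint_scaleC[OF bounded]
        cinner_add_left cinner_add_right cinner_scaleC_left cinner_scaleC_right)
  moreover have "cross_form M F F x x = cinner (cadjoint K x) (cadjoint K x)" for x
    by (simp add: cross_form_diagonal integral_frame_square cinner_self_norm)
  ultimately show ?thesis
    by (rule sesquilinear_eq_if_diagonal_eq)
qed

lemma cadjoint_K_cadjoint_pinv: "cadjoint K (cadjoint pinv f) = pinv (K f)"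
  by (rule cinner_left_ext)
    (simp add: cinner_cadjoint_left[OF bounded] cinner_cadjoint_left[OF bounded_clinear_pinv]
      cinner_pinv_K)

lemma cinner_canonical_dual: "cinner f (pinv (F \<omega>)) = cinner (cadjoint pinv f) (F \<omega>)"
  by (simp add: cinner_cadjoint_left[OF bounded_clinear_pinv])

lemma weakly_L2_canonical_dual: "weakly_L2 M (\<lambda>\<omega>. pinv (F \<omega>))"
  using weakly_L2_frame by (simp add: weakly_L2_def cinner_canonical_dual)

lemma cross_form_canonical_frame:
  "cross_form M (\<lambda>\<omega>. pinv (F \<omega>)) F f h = cinner (pinv (K f)) (cadjoint K h)"
  by (simp add: cross_form_def cinner_canonical_dual cross_form_frame[unfolded cross_form_def]
      cadjoint_K_cadjoint_pinv)

lemma dual_cont_K_bessel_canonical: "dual_cont_K_bessel M K F (\<lambda>\<omega>. pinv (F \<omega>))"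
  unfolding dual_cont_K_bessel_def cont_bessel_def
proof (intro conjI allI)
  show "weakly_measurable M (\<lambda>\<omega>. pinv (F \<omega>))"
    using weakly_L2D(1)[OF weakly_L2_canonical_dual] by (simp add: weakly_measurable_def)
  have "(\<integral>\<^sup>+\<omega>. ennreal ((cmod (cinner f (pinv (F \<omega>))))\<^sup>2) \<partial>M) \<le> ennreal (1 * (norm f)\<^sup>2)" for f
    using parseval norm_pinv_K_le[of f]
    by (simp add: parseval_cont_K_frame_def cinner_canonical_dual cadjoint_K_cadjoint_pinv
        power_mono)
  then show "\<exists>B>0. \<forall>f. (\<integral>\<^sup>+\<omega>. ennreal ((cmod (cinner f (pinv (F \<omega>))))\<^sup>2) \<partial>M) \<le> ennreal (B * (norm f)\<^sup>2)"
    by (intro exI[of _ 1]) simp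
  show "cinner (K f) h = (LINT \<omega>|M. cinner f (pinv (F \<omega>)) * cinner (F \<omega>) h)" for f h
    using cross_form_canonical_frame[of f h]
    by (simp add: cross_form_def cinner_cadjoint[OF bounded, symmetric] K_pinv_K)
qed

lemma cross_form_canonical_right:
  assumes "dual_cont_K_bessel M K F Q"
  shows "cross_form M Q (\<lambda>\<omega>. pinv (F \<omega>)) f h = cinner (pinv (K f)) h"
  using assms
  by (simp add: cross_form_def dual_cont_K_bessel_def cinner_cadjoint[OF bounded_clinear_pinv])

lemma cross_form_canonical_left:
  assumes "dual_cont_K_bessel M K F Q"
  shows "cross_form M (\<lambda>\<omega>. pinv (F \<omega>)) Q f h = cinner (pinv (K f)) h"
  by (simp add: cross_form_cnj[of M _ Q] cross_form_canonical_right[OF assms] cinner_pinv_K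
      cinner_commute[of f])

lemma analysis_adj_comp_eq_if_canonical:
  assumes G: "dual_cont_K_bessel M K F G" and canonical: "AE \<omega> in M. G \<omega> = pinv (F \<omega>)"
    and Q: "dual_cont_K_bessel M K F Q"
  shows "analysis_adj M G \<circ> analysis_op G = analysis_adj M G \<circ> analysis_op Q"
proof (rule ext, unfold comp_apply, rule cinner_left_ext)
  fix f h
  have bessel_G: "cont_bessel M G" and bessel_Q: "cont_bessel M Q"
    using G Q by (simp_all add: dual_cont_K_bessel_def)
  note L2 = cont_bessel_imp_weakly_L2[OF bessel_G] cont_bessel_imp_weakly_L2[OF bessel_Q]
    weakly_L2_canonical_dual
  have "cinner (analysis_adj M G (analysis_op G f)) h = cross_form M G G f h"
    by (rule cinner_analysis_adj[OF L2(1) bessel_G])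
  also have "\<dots> = cross_form M (\<lambda>\<omega>. pinv (F \<omega>)) (\<lambda>\<omega>. pinv (F \<omega>)) f h"
    by (rule cross_form_cong_AE[OF L2(1,1,3,3) canonical canonical])
  also have "\<dots> = cross_form M Q (\<lambda>\<omega>. pinv (F \<omega>)) f h"
    by (simp add: cross_form_canonical_right[OF dual_cont_K_bessel_canonical] cross_form_canonical_right[OF Q])
  also have "\<dots> = cross_form M Q G f h"
    using canonical by (intro cross_form_cong_AE[OF L2(2,3,2,1)]) auto
  also have "\<dots> = cinner (analysis_adj M G (analysis_op Q f)) h"
    by (rule cinner_analysis_adj[OF L2(2) bessel_G, symmetric])
  finally show "cinner (analysis_adj M G (analysis_op G f)) h
      = cinner (analysis_adj M G (analysis_op Q f)) h" .
qed

lemma canonical_if_analysis_adj_comp_eq: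
  assumes "separable_hilbert TYPE('h)" and G: "dual_cont_K_bessel M K F G"
    and eq: "analysis_adj M G \<circ> analysis_op G = analysis_adj M G \<circ> analysis_op (\<lambda>\<omega>. pinv (F \<omega>))"
  shows "AE \<omega> in M. G \<omega> = pinv (F \<omega>)"
proof -
  have bessel_G: "cont_bessel M G"
    using G by (simp add: dual_cont_K_bessel_def)
  note L2 = cont_bessel_imp_weakly_L2[OF bessel_G] weakly_L2_canonical_dual
  have "cross_form M G G f h = cross_form M (\<lambda>\<omega>. pinv (F \<omega>)) G f h" for f h
    using fun_cong[OF eq, of f]
    by (simp add: cinner_analysis_adj[OF L2(1) bessel_G, symmetric]
        cinner_analysis_adj[OF L2(2) bessel_G, symmetric])
  then show ?thesis
    using cross_form_canonical_right[OF G] cross_form_canonical_left[OF G]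
      cross_form_canonical_right[OF dual_cont_K_bessel_canonical]
    by (intro AE_eq_if_cross_forms_agree[OF assms(1) L2]) simp_all
qed

end

theorem theorem3p6:
  fixes M :: "'o measure"
    and K :: "'h::complex_hilbert_space \<Rightarrow> 'h"
    and F G :: "'o \<Rightarrow> 'h"
  assumes "separable_hilbert TYPE('h)"
    and "bounded_clinear K"
    and "closed (range K)"
    and "parseval_cont_K_frame M K F"
    and "dual_cont_K_bessel M K F G"
  shows "(AE \<omega> in M. G \<omega> = moore_penrose K (F \<omega>)) \<longleftrightarrow>
         (\<forall>Q. dual_cont_K_bessel M K F Q \<longrightarrow>
              analysis_adj M G \<circ> analysis_op G = analysis_adj M G \<circ> analysis_op Q)"
proof -
  interpret parseval_K_frame K M F
    using assms(2-4) by unfold_locales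
  show ?thesis
    unfolding moore_penrose_eq_pinv
    using analysis_adj_comp_eq_if_canonical[OF assms(5)]
      canonical_if_analysis_adj_comp_eq[OF assms(1,5)] dual_cont_K_bessel_canonical
    by blast
qed

end
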